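(* If $n>0$ then $v_1=v_2=1$.
   Context: $k$ is a field of characteristic zero, $\mathcal O_n=k[x]/(x^{n+1})$, elements of $\mathcal O_n$ identified with multiplication operators, $\operatorname{ad}_x(\delta)=x\delta-\delta x$. The order filtration is $\mathcal D^p(\mathcal O_n)=\{\delta\in\operatorname{End}_k(\mathcal O_n):[f_0,[f_1,\dots,[f_p,\delta]\dots]]=0\ \forall f_i\in\mathcal O_n\}$. For $\delta\in\mathcal D^p(\mathcal O_n)$, $\operatorname{ad}_x^p(\delta)$ is multiplication by an element of $\mathcal O_n$ and $\operatorname{ad}_x^p:\mathcal D^p(\mathcal O_n)\to\mathcal O_n$ is $\mathcal O_n$-linear, so its image is an ideal $(x^{v_p})$ of $\mathcal O_n$; $v_p\in\{0,\dots,n\}$ denotes the corresponding exponent. *)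

theory Defs
  imports "HOL-Computational_Algebra.Polynomial"
begin

text \<open>O_n = k[x]/(x^(n+1)) is represented by the polynomials of degree at most n;
  multiplication in O_n is polynomial multiplication followed by reduction mod x^(n+1).\<close>

definition On :: "nat \<Rightarrow> 'k::field_char_0 poly set" where
  "On n = {p. degree p \<le> n}"

definition mulop :: "nat \<Rightarrow> 'k::field_char_0 poly \<Rightarrow> 'k poly \<Rightarrow> 'k poly" where
  "mulop n f = (\<lambda>g. (f * g) mod monom 1 (Suc n))"

definition is_End :: "nat \<Rightarrow> ('k::field_char_0 poly \<Rightarrow> 'k poly) \<Rightarrow> bool" where
  "is_End n \<delta> \<longleftrightarrow> (\<forall>g\<in>On n. \<delta> g \<in> On n)
     \<and> (\<forall>a\<in>On n. \<forall>b\<in>On n. \<delta> (a + b) = \<delta> a + \<delta> b)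
     \<and> (\<forall>c. \<forall>a\<in>On n. \<delta> (smult c a) = smult c (\<delta> a))"

definition comm :: "nat \<Rightarrow> 'k::field_char_0 poly \<Rightarrow> ('k poly \<Rightarrow> 'k poly) \<Rightarrow> 'k poly \<Rightarrow> 'k poly" where
  "comm n f \<delta> = (\<lambda>g. mulop n f (\<delta> g) - \<delta> (mulop n f g))"

fun iter_comm :: "nat \<Rightarrow> 'k::field_char_0 poly list \<Rightarrow> ('k poly \<Rightarrow> 'k poly) \<Rightarrow> 'k poly \<Rightarrow> 'k poly" where
  "iter_comm n [] \<delta> = \<delta>"
| "iter_comm n (f # fs) \<delta> = comm n f (iter_comm n fs \<delta>)"

definition Dp :: "nat \<Rightarrow> nat \<Rightarrow> ('k::field_char_0 poly \<Rightarrow> 'k poly) set" where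
  "Dp n p = {\<delta>. is_End n \<delta> \<and>
     (\<forall>fs. length fs = Suc p \<longrightarrow> set fs \<subseteq> On n \<longrightarrow> (\<forall>g\<in>On n. iter_comm n fs \<delta> g = 0))}"

definition ad_x :: "nat \<Rightarrow> ('k::field_char_0 poly \<Rightarrow> 'k poly) \<Rightarrow> 'k poly \<Rightarrow> 'k poly" where
  "ad_x n = comm n [:0, 1:]"

text \<open>Image of ad_x^p on D^p, as a subset of O_n (elements h whose multiplication
  operator equals ad_x^p(delta) for some delta in D^p).\<close>
definition ad_image :: "nat \<Rightarrow> nat \<Rightarrow> 'k::field_char_0 poly set" where
  "ad_image n p = {h \<in> On n. \<exists>\<delta>\<in>Dp n p. \<forall>g\<in>On n. (ad_x n ^^ p) \<delta> g = mulop n h g}"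

definition xideal :: "nat \<Rightarrow> nat \<Rightarrow> 'k::field_char_0 poly set" where
  "xideal n v = {mulop n (monom 1 v) a | a. a \<in> On n}"

definition vexp :: "'k::field_char_0 itself \<Rightarrow> nat \<Rightarrow> nat \<Rightarrow> nat" where
  "vexp K n p = (THE v. v \<le> n \<and> ad_image n p = (xideal n v :: 'k poly set))"

end

theory Submission
  imports Defs
begin

(* Upper bound: ad_x(delta) = x delta - delta x is a commutator of operators on the
  finite-dimensional space O_n, so its trace in the monomial basis vanishes, while multiplication
  by h has trace (n+1) h(0).  In characteristic zero this forces h(0) = 0, so the image of ad_x^p
  lies in (x) for every p >= 1.
  Lower bound: write h = x q.  The differential operators -h d/dx and (q/2)(x d^2/dx^2 - n d/dx)
  preserve the ideal (x^(n+1)), hence induce operators of order 1 resp. 2 on O_n, and ad_x resp.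
  ad_x^2 sends them to multiplication by h. *)

lemma x_mult_monom: "[:0, 1:] * monom (c :: 'a::comm_semiring_1) k = monom c (Suc k)"
  by (simp add: monom_Suc)

lemma coeff_mod_monom:
  "i \<le> n \<Longrightarrow> coeff (p mod monom 1 (Suc n)) i = coeff (p :: 'k::field poly) i"
proof -
  assume "i \<le> n"
  then have "coeff (p div monom 1 (Suc n) * monom 1 (Suc n)) i = 0"
    by (simp add: mult.commute[of _ "monom 1 (Suc n)"] coeff_monom_mult)
  then show ?thesis
    by (metis add.left_neutral coeff_add div_mult_mod_eq)
qed

lemma mod_monom_in_On: "(p :: 'k::field_char_0 poly) mod monom 1 (Suc n) \<in> On n"
proof -
  have "p mod monom 1 (Suc n) = 0 \<or> degree (p mod monom 1 (Suc n)) < Suc n"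
    using degree_mod_less[of "monom 1 (Suc n)" p] by (simp add: degree_monom_eq)
  then show ?thesis by (auto simp: On_def)
qed

lemma mod_monom_eq_self: "p \<in> On n \<Longrightarrow> p mod monom 1 (Suc n) = (p :: 'k::field_char_0 poly)"
  by (rule mod_poly_less) (simp add: On_def degree_monom_eq)

lemma monom_in_On: "k \<le> n \<Longrightarrow> (monom c k :: 'k::field_char_0 poly) \<in> On n"
  by (simp add: On_def degree_monom_le le_trans[OF degree_monom_le])

lemma xideal_eq: "xideal n v = {h \<in> On n. \<forall>i<v. coeff h i = (0 :: 'k::field_char_0)}"
proof (intro set_eqI iffI)
  fix h :: "'k poly"
  assume "h \<in> xideal n v"
  then obtain a where h: "h = (monom 1 v * a) mod monom 1 (Suc n)"
    unfolding xideal_def mulop_def by blast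
  have "coeff h i = 0" if "i < v" for i
  proof (cases "i \<le> n")
    case True
    then show ?thesis using that by (simp add: h coeff_mod_monom coeff_monom_mult)
  next
    case False
    then show ?thesis using mod_monom_in_On[of "monom 1 v * a" n]
      by (simp add: h On_def coeff_eq_0)
  qed
  then show "h \<in> {h \<in> On n. \<forall>i<v. coeff h i = 0}"
    using h mod_monom_in_On by blast
next
  fix h :: "'k poly"
  assume h: "h \<in> {h \<in> On n. \<forall>i<v. coeff h i = 0}"
  then obtain q where q: "h = monom 1 v * q"
    using monom_1_dvd_iff' by blast
  have "mulop n (monom 1 v) (q mod monom 1 (Suc n)) = h"
    using h by (simp add: mulop_def mod_mult_right_eq flip: q) (simp add: mod_monom_eq_self)
  then show "h \<in> xideal n v"
    unfolding xideal_def using mod_monom_in_On by blast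
qed

lemma monom_in_xideal: "v \<le> n \<Longrightarrow> (monom 1 v :: 'k::field_char_0 poly) \<in> xideal n v"
  by (simp add: xideal_eq monom_in_On)

lemma xideal_inj:
  assumes "v \<le> n" "w \<le> n" "xideal n v = (xideal n w :: 'k::field_char_0 poly set)"
  shows "v = w"
proof (rule ccontr)
  assume "v \<noteq> w"
  then consider "v < w" | "w < v" by linarith
  then show False
  proof cases
    case 1
    then have "(monom 1 v :: 'k poly) \<notin> xideal n w" by (simp add: xideal_eq)
    then show False using monom_in_xideal[OF assms(1)] assms(3) by blast
  next
    case 2
    then have "(monom 1 w :: 'k poly) \<notin> xideal n v" by (simp add: xideal_eq)
    then show False using monom_in_xideal[OF assms(2)] assms(3) by blast
  qed
qed

lemma vexp_eqI:
  assumes "v \<le> n" "ad_image n p = (xideal n v :: 'k::field_char_0 poly set)"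
  shows "vexp TYPE('k) n p = v"
  unfolding vexp_def
  by (rule the_equality) (use assms xideal_inj in auto)

definition op_trace :: "nat \<Rightarrow> ('k::field_char_0 poly \<Rightarrow> 'k poly) \<Rightarrow> 'k" where
  "op_trace n T = (\<Sum>k\<le>n. coeff (T (monom 1 k)) k)"

lemma op_trace_cong: "(\<And>g. g \<in> On n \<Longrightarrow> S g = T g) \<Longrightarrow> op_trace n S = op_trace n T"
  unfolding op_trace_def by (simp add: monom_in_On)

lemma op_trace_mulop: "op_trace n (mulop n h) = of_nat (Suc n) * coeff h 0"
proof -
  have "coeff (mulop n h (monom 1 k)) k = coeff h 0" if "k \<le> n" for k
    using that by (simp add: mulop_def coeff_mod_monom mult.commute[of h] coeff_monom_mult)
  then show ?thesis by (simp add: op_trace_def)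
qed

lemma op_trace_ad_x:
  assumes "\<delta> 0 = 0"
  shows "op_trace n (ad_x n \<delta>) = 0"
proof -
  define f where "f k = coeff ([:0, 1:] * \<delta> (monom 1 k mod monom 1 (Suc n))) k" for k
  have "coeff (ad_x n \<delta> (monom 1 k)) k = f k - f (Suc k)" if "k \<le> n" for k
    unfolding ad_x_def comm_def mulop_def x_mult_monom
    using that by (simp add: f_def coeff_mod_monom mod_monom_eq_self monom_in_On)
  then have "op_trace n (ad_x n \<delta>) = f 0 - f (Suc n)"
    by (simp add: op_trace_def sum_telescope)
  also have "\<dots> = 0"
    using assms by (simp add: f_def)
  finally show ?thesis .
qed

lemma is_End_zero: "is_End n (\<delta> :: 'k::field_char_0 poly \<Rightarrow> 'k poly) \<Longrightarrow> \<delta> 0 = 0"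
proof -
  assume "is_End n \<delta>"
  moreover have "(0 :: 'k poly) \<in> On n" by (simp add: On_def)
  ultimately have "\<delta> (0 + 0) = \<delta> 0 + \<delta> 0" unfolding is_End_def by blast
  then show ?thesis by simp
qed

lemma funpow_ad_x_zero: "\<delta> 0 = 0 \<Longrightarrow> (ad_x n ^^ p) \<delta> 0 = 0"
  by (induction p) (simp_all add: ad_x_def comm_def mulop_def)

lemma ad_image_subset_xideal:
  assumes "0 < p"
  shows "ad_image n p \<subseteq> (xideal n 1 :: 'k::field_char_0 poly set)"
proof
  fix h :: "'k poly"
  assume "h \<in> ad_image n p"
  then obtain \<delta> where h: "h \<in> On n" and "\<delta> \<in> Dp n p"
    and eq: "\<And>g. g \<in> On n \<Longrightarrow> (ad_x n ^^ p) \<delta> g = mulop n h g"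
    unfolding ad_image_def by blast
  then have "\<delta> 0 = 0" unfolding Dp_def by (blast intro: is_End_zero)
  obtain m where "p = Suc m"
    using assms gr0_conv_Suc by blast
  then have "(ad_x n ^^ p) \<delta> = ad_x n ((ad_x n ^^ m) \<delta>)"
    by simp
  then have "op_trace n ((ad_x n ^^ p) \<delta>) = 0"
    by (simp add: op_trace_ad_x funpow_ad_x_zero \<open>\<delta> 0 = 0\<close>)
  then have "of_nat (Suc n) * coeff h 0 = 0"
    by (simp only: op_trace_cong[OF eq] op_trace_mulop)
  then show "h \<in> xideal n 1"
    using h by (simp add: xideal_eq del: of_nat_Suc)
qed

definition ideal_preserving :: "nat \<Rightarrow> ('k::field_char_0 poly \<Rightarrow> 'k poly) \<Rightarrow> bool" where
  "ideal_preserving n T \<longleftrightarrow> (\<forall>a b. T (a + b) = T a + T b) \<and> (\<forall>c a. T (smult c a) = smult c (T a))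
     \<and> (\<forall>q. monom 1 (Suc n) dvd T (q * monom 1 (Suc n)))"

definition induced_op :: "nat \<Rightarrow> ('k::field_char_0 poly \<Rightarrow> 'k poly) \<Rightarrow> 'k poly \<Rightarrow> 'k poly" where
  "induced_op n T g = T g mod monom 1 (Suc n)"

definition poly_comm :: "'k::field_char_0 poly \<Rightarrow> ('k poly \<Rightarrow> 'k poly) \<Rightarrow> 'k poly \<Rightarrow> 'k poly" where
  "poly_comm f T g = f * T g - T (f * g)"

lemma ideal_preserving_mod:
  assumes "ideal_preserving n T"
  shows "T (g mod monom 1 (Suc n)) mod monom 1 (Suc n) = T g mod monom 1 (Suc n)"
proof -
  have "T g = T (g div monom 1 (Suc n) * monom 1 (Suc n)) + T (g mod monom 1 (Suc n))"
    using assms unfolding ideal_preserving_def by (metis div_mult_mod_eq)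
  moreover have "monom 1 (Suc n) dvd T (g div monom 1 (Suc n) * monom 1 (Suc n))"
    using assms unfolding ideal_preserving_def by blast
  ultimately show ?thesis by (simp add: poly_mod_add_left)
qed

lemma comm_induced_op:
  assumes "ideal_preserving n T"
  shows "comm n f (induced_op n T) = induced_op n (poly_comm f T)"
proof
  fix g
  have "comm n f (induced_op n T) g
      = (f * (T g mod monom 1 (Suc n))) mod monom 1 (Suc n)
        - T ((f * g) mod monom 1 (Suc n)) mod monom 1 (Suc n)"
    by (simp add: comm_def mulop_def induced_op_def)
  also have "\<dots> = (f * T g - T (f * g)) mod monom 1 (Suc n)"
    by (simp add: mod_mult_right_eq ideal_preserving_mod[OF assms] poly_mod_diff_left)
  finally show "comm n f (induced_op n T) g = induced_op n (poly_comm f T) g"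
    by (simp add: induced_op_def poly_comm_def)
qed

lemma ideal_preserving_poly_comm:
  assumes "ideal_preserving n T"
  shows "ideal_preserving n (poly_comm f T)"
proof -
  have "monom 1 (Suc n) dvd poly_comm f T (q * monom 1 (Suc n))" for q
  proof -
    have "monom 1 (Suc n) dvd T (q * monom 1 (Suc n))"
      and "monom 1 (Suc n) dvd T ((f * q) * monom 1 (Suc n))"
      using assms unfolding ideal_preserving_def by blast+
    then show ?thesis by (simp add: poly_comm_def mult.assoc dvd_diff)
  qed
  with assms show ?thesis
    by (simp add: ideal_preserving_def poly_comm_def distrib_left smult_diff_right)
qed

lemma is_End_induced_op: "ideal_preserving n T \<Longrightarrow> is_End n (induced_op n T)"
  by (simp add: is_End_def ideal_preserving_def induced_op_def mod_monom_in_On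
      poly_mod_add_left mod_smult_left)

lemma ideal_preserving_foldr_poly_comm:
  "ideal_preserving n T \<Longrightarrow> ideal_preserving n (foldr poly_comm fs T)"
  by (induction fs) (simp_all add: ideal_preserving_poly_comm)

lemma ideal_preserving_funpow_poly_comm:
  "ideal_preserving n T \<Longrightarrow> ideal_preserving n ((poly_comm f ^^ p) T)"
  by (induction p) (simp_all add: ideal_preserving_poly_comm)

lemma iter_comm_induced_op:
  "ideal_preserving n T \<Longrightarrow> iter_comm n fs (induced_op n T) = induced_op n (foldr poly_comm fs T)"
  by (induction fs) (simp_all add: comm_induced_op ideal_preserving_foldr_poly_comm)

lemma funpow_ad_x_induced_op:
  "ideal_preserving n T \<Longrightarrow> (ad_x n ^^ p) (induced_op n T) = induced_op n ((poly_comm [:0, 1:] ^^ p) T)"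
  by (induction p) (simp_all add: ad_x_def comm_induced_op ideal_preserving_funpow_poly_comm)

lemma induced_op_in_Dp:
  assumes "ideal_preserving n T" and "\<And>fs. length fs = Suc p \<Longrightarrow> foldr poly_comm fs T = (\<lambda>_. 0)"
  shows "induced_op n T \<in> Dp n p"
  using assms by (simp add: Dp_def is_End_induced_op iter_comm_induced_op induced_op_def)

lemma in_ad_imageI:
  assumes "ideal_preserving n T" "induced_op n T \<in> Dp n p"
    and "(poly_comm [:0, 1:] ^^ p) T = (\<lambda>g. h * g)" and "h \<in> On n"
  shows "h \<in> ad_image n p"
proof -
  have "(ad_x n ^^ p) (induced_op n T) g = mulop n h g" for g
    using assms by (simp add: funpow_ad_x_induced_op induced_op_def mulop_def)
  with assms show ?thesis
    unfolding ad_image_def by blast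
qed

definition first_order_op :: "'k::field_char_0 poly \<Rightarrow> 'k poly \<Rightarrow> 'k poly \<Rightarrow> 'k poly" where
  "first_order_op b a g = b * g + a * pderiv g"

(* The term -n d/dx makes the operator annihilate x^(n+1); this is what lets it descend to O_n. *)
definition second_order_op :: "nat \<Rightarrow> 'k::field_char_0 poly \<Rightarrow> 'k poly \<Rightarrow> 'k poly" where
  "second_order_op n u g = u * ([:0, 1:] * pderiv (pderiv g) - of_nat n * pderiv g)"

lemma of_nat_mult_monom: "of_nat k * monom c k = monom (of_nat k * c) k"
  by (simp add: of_nat_poly smult_monom)

lemma x_mult_pderiv_monom:
  "[:0, 1:] * pderiv (monom c k) = of_nat k * (monom c k :: 'k::field_char_0 poly)"
proof (cases k)
  case (Suc m)
  then show ?thesis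
    by (simp only: pderiv_monom diff_Suc_1 x_mult_monom of_nat_mult_monom)
qed (simp add: pderiv_monom)

lemma poly_comm_first_order_op:
  "poly_comm f (first_order_op b a) = first_order_op (- (a * pderiv f)) 0"
  by (rule ext) (simp add: poly_comm_def first_order_op_def pderiv_mult algebra_simps)

lemma poly_comm_second_order_op:
  "poly_comm f (second_order_op n u)
    = first_order_op (u * (of_nat n * pderiv f - [:0, 1:] * pderiv (pderiv f)))
        (- 2 * u * [:0, 1:] * pderiv f)"
  by (rule ext) (simp add: poly_comm_def first_order_op_def second_order_op_def pderiv_mult
      pderiv_add algebra_simps del: mult_pCons_left)

lemma ideal_preserving_first_order_op:
  assumes "[:0, 1:] dvd a"
  shows "ideal_preserving n (first_order_op 0 a)"
proof -
  obtain c where a: "a = [:0, 1:] * c" using assms by blast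
  have "first_order_op 0 a (q * monom 1 (Suc n))
      = monom 1 (Suc n) * (c * ([:0, 1:] * pderiv q + of_nat (Suc n) * q))" for q
  proof -
    have "first_order_op 0 a (q * monom 1 (Suc n))
        = c * ([:0, 1:] * pderiv q * monom 1 (Suc n) + q * ([:0, 1:] * pderiv (monom 1 (Suc n))))"
      by (simp add: first_order_op_def a pderiv_mult algebra_simps)
    then show ?thesis
      by (simp only: x_mult_pderiv_monom) (simp add: algebra_simps)
  qed
  then have "monom 1 (Suc n) dvd first_order_op 0 a (q * monom 1 (Suc n))" for q
    by (metis dvd_triv_left)
  moreover have "first_order_op 0 a (p + q) = first_order_op 0 a p + first_order_op 0 a q"
    and "first_order_op 0 a (smult k p) = smult k (first_order_op 0 a p)" for p q k
    by (simp_all add: first_order_op_def pderiv_add pderiv_smult algebra_simps)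
  ultimately show ?thesis
    unfolding ideal_preserving_def by blast
qed

lemma ideal_preserving_second_order_op: "ideal_preserving n (second_order_op n u)"
proof -
  let ?X = "monom 1 (Suc n) :: 'k::field_char_0 poly"
  have X1: "[:0, 1:] * pderiv ?X = of_nat (Suc n) * ?X"
    by (rule x_mult_pderiv_monom)
  have X2: "[:0, 1:] * pderiv (pderiv ?X) = of_nat n * pderiv ?X"
    unfolding pderiv_monom[of 1 "Suc n"] diff_Suc_1 by (rule x_mult_pderiv_monom)
  have "second_order_op n u (q * ?X)
      = ?X * (u * ([:0, 1:] * pderiv (pderiv q) + (2 * of_nat (Suc n) - of_nat n) * pderiv q))" for q
  proof -
    have "second_order_op n u (q * ?X)
        = u * ([:0, 1:] * pderiv (pderiv q) * ?X + 2 * pderiv q * ([:0, 1:] * pderiv ?X)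
            + q * ([:0, 1:] * pderiv (pderiv ?X)) - of_nat n * pderiv q * ?X
            - of_nat n * q * pderiv ?X)"
      by (simp add: second_order_op_def pderiv_mult pderiv_add algebra_simps
          del: mult_pCons_left mult_pCons_right)
    also have "\<dots> = ?X * (u * ([:0, 1:] * pderiv (pderiv q) + (2 * of_nat (Suc n) - of_nat n) * pderiv q))"
      unfolding X1 X2 by (simp add: algebra_simps del: mult_pCons_left mult_pCons_right)
    finally show ?thesis .
  qed
  then have "?X dvd second_order_op n u (q * ?X)" for q
    by (metis dvd_triv_left)
  moreover have "second_order_op n u (p + q) = second_order_op n u p + second_order_op n u q"
    and "second_order_op n u (smult k p) = smult k (second_order_op n u p)" for p q k
    by (simp_all add: second_order_op_def pderiv_add pderiv_smult algebra_simps smult_diff_right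
        del: mult_pCons_left mult_pCons_right)
  ultimately show ?thesis
    unfolding ideal_preserving_def by blast
qed

lemma first_order_op_0_0: "first_order_op 0 0 = (\<lambda>_. 0)"
  by (simp add: first_order_op_def fun_eq_iff)

lemma first_order_op_in_Dp:
  fixes a :: "'k::field_char_0 poly"
  assumes "[:0, 1:] dvd a"
  shows "induced_op n (first_order_op 0 a) \<in> Dp n 1"
proof (rule induced_op_in_Dp)
  fix fs :: "'k::field_char_0 poly list"
  assume "length fs = Suc 1"
  then obtain f0 f1 where "fs = [f0, f1]"
    by (auto simp: length_Suc_conv)
  then show "foldr poly_comm fs (first_order_op 0 a) = (\<lambda>_. 0)"
    by (simp add: poly_comm_first_order_op first_order_op_0_0)
qed (rule ideal_preserving_first_order_op[OF assms])

lemma second_order_op_in_Dp: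
  "induced_op n (second_order_op n (u :: 'k::field_char_0 poly)) \<in> Dp n 2"
proof (rule induced_op_in_Dp)
  fix fs :: "'k::field_char_0 poly list"
  assume "length fs = Suc 2"
  then obtain f0 f1 f2 where "fs = [f0, f1, f2]"
    by (auto simp: length_Suc_conv numeral_2_eq_2)
  then show "foldr poly_comm fs (second_order_op n u) = (\<lambda>_. 0)"
    by (simp add: poly_comm_second_order_op poly_comm_first_order_op first_order_op_0_0)
qed (rule ideal_preserving_second_order_op)

lemma in_xideal_1_imp_x_dvd: "h \<in> xideal n 1 \<Longrightarrow> [:0, 1:] dvd h"
  using monom_1_dvd_iff'[of 1 h] by (simp add: xideal_eq monom_Suc monom_0)

lemma xideal_subset_ad_image_1: "xideal n 1 \<subseteq> (ad_image n 1 :: 'k::field_char_0 poly set)"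
proof
  fix h :: "'k poly"
  assume h: "h \<in> xideal n 1"
  then have dvd: "[:0, 1:] dvd - h"
    by (simp add: in_xideal_1_imp_x_dvd)
  have "(poly_comm [:0, 1:] ^^ 1) (first_order_op 0 (- h)) = (\<lambda>g. h * g)"
    by (simp add: poly_comm_first_order_op first_order_op_def fun_eq_iff pderiv_pCons)
  from in_ad_imageI[OF ideal_preserving_first_order_op[OF dvd] first_order_op_in_Dp[OF dvd] this]
  show "h \<in> ad_image n 1"
    using h by (simp add: xideal_eq)
qed

lemma xideal_subset_ad_image_2: "xideal n 1 \<subseteq> (ad_image n 2 :: 'k::field_char_0 poly set)"
proof
  fix h :: "'k poly"
  assume h: "h \<in> xideal n 1"
  then obtain q where q: "h = [:0, 1:] * q"
    using in_xideal_1_imp_x_dvd by blast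
  define u where "u = smult (1 / 2) q"
  have "(poly_comm [:0, 1:] ^^ 2) (second_order_op n u) = (\<lambda>g. (2 * u * [:0, 1:]) * g)"
    by (simp add: numeral_2_eq_2 poly_comm_second_order_op poly_comm_first_order_op
        first_order_op_def fun_eq_iff pderiv_pCons)
  also have "2 * u * [:0, 1:] = h"
    by (simp add: u_def q numeral_poly mult.commute)
  finally have "(poly_comm [:0, 1:] ^^ 2) (second_order_op n u) = (\<lambda>g. h * g)" .
  from in_ad_imageI[OF ideal_preserving_second_order_op second_order_op_in_Dp this]
  show "h \<in> ad_image n 2"
    using h by (simp add: xideal_eq)
qed

theorem lemma6:
  fixes n :: nat
  assumes "n > 0"
  shows "vexp TYPE('k::field_char_0) n 1 = 1 \<and> vexp TYPE('k) n 2 = 1"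
proof -
  have "ad_image n 1 = (xideal n 1 :: 'k poly set)"
    by (intro subset_antisym ad_image_subset_xideal xideal_subset_ad_image_1) simp
  moreover have "ad_image n 2 = (xideal n 1 :: 'k poly set)"
    by (intro subset_antisym ad_image_subset_xideal xideal_subset_ad_image_2) simp
  ultimately show ?thesis
    using assms by (simp add: vexp_eqI)
qed

end
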